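(* Each of the following four mechanisms for locating an obnoxious facility on $[0,1]$ is group strategyproof. Here, for a profile $\mathbf x\in[0,1]^n$, $n_1=|\{i:x_i\in[0,\tfrac12]\}|$ and $n_2=|\{i:x_i\in(\tfrac12,1]\}|$. (1) Majority Vote: output $y=0$ if $n_1\le n_2$, else $y=1$. (2) Output the uniform distribution over $[0,1]$. (3) Output $y=0$ with probability $\frac{n_2^2}{n_1^2+n_2^2}$ and $y=1$ with probability $\frac{n_1^2}{n_1^2+n_2^2}$. (4) For a fixed real parameter $p$, output $y=0$ with probability $P_0=\frac{n_2^2+2^pn_1n_2}{n_1^2+n_2^2+2^{p+1}n_1n_2}$ and $y=1$ with probability $1-P_0$.
   Context: Agents $i\in N=\{1,\dots,n\}$ have private locations $x_i\in[0,1]$; agent $i$'s utility from a (possibly random) facility location is its (expected) distance $\mathbb E|x_i-y|$. A mechanism $f$ is group strategyproof if for every profile $\mathbf x$, every coalition $S\subseteq N$ and every joint misreport $\mathbf x_S'$, there exists $i\in S$ whose utility under $f(\mathbf x_S',\mathbf x_{-S})$ is not strictly larger than under $f(\mathbf x)$. *)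

theory Defs
  imports "HOL-Probability.Probability"
begin

text \<open>Agents are 1..n; a profile is a function nat => real (only values on {1..n} matter).
  A (possibly random) facility location is a probability measure on the reals.\<close>

definition valid_profile :: "nat \<Rightarrow> (nat \<Rightarrow> real) \<Rightarrow> bool" where
  "valid_profile n x \<longleftrightarrow> (\<forall>i\<in>{1..n}. x i \<in> {0..1})"

definition n1 :: "nat \<Rightarrow> (nat \<Rightarrow> real) \<Rightarrow> nat" where
  "n1 n x = card {i\<in>{1..n}. x i \<in> {0..1/2}}"

definition n2 :: "nat \<Rightarrow> (nat \<Rightarrow> real) \<Rightarrow> nat" where
  "n2 n x = card {i\<in>{1..n}. x i \<in> {1/2<..1}}"

definition util :: "real measure \<Rightarrow> real \<Rightarrow> real" where
  "util M xi = integral\<^sup>L M (\<lambda>y. \<bar>xi - y\<bar>)"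

definition group_strategyproof :: "nat \<Rightarrow> ((nat \<Rightarrow> real) \<Rightarrow> real measure) \<Rightarrow> bool" where
  "group_strategyproof n f \<longleftrightarrow>
     (\<forall>x. valid_profile n x \<longrightarrow>
       (\<forall>S. S \<subseteq> {1..n} \<and> S \<noteq> {} \<longrightarrow>
         (\<forall>x'. valid_profile n x' \<and> (\<forall>i\<in>{1..n} - S. x' i = x i) \<longrightarrow>
            (\<exists>i\<in>S. util (f x') (x i) \<le> util (f x) (x i)))))"

definition zero_one :: "real \<Rightarrow> real measure" where
  "zero_one q = measure_pmf (map_pmf (\<lambda>b. if b then 0 else 1) (bernoulli_pmf q))"

definition mech_majority :: "nat \<Rightarrow> (nat \<Rightarrow> real) \<Rightarrow> real measure" where
  "mech_majority n x = measure_pmf (return_pmf (if n1 n x \<le> n2 n x then 0 else 1))"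

definition mech_uniform :: "nat \<Rightarrow> (nat \<Rightarrow> real) \<Rightarrow> real measure" where
  "mech_uniform n x = uniform_measure lborel {0..1}"

definition mech_square :: "nat \<Rightarrow> (nat \<Rightarrow> real) \<Rightarrow> real measure" where
  "mech_square n x = zero_one
     (real (n2 n x)^2 / (real (n1 n x)^2 + real (n2 n x)^2))"

definition mech_param :: "real \<Rightarrow> nat \<Rightarrow> (nat \<Rightarrow> real) \<Rightarrow> real measure" where
  "mech_param p n x = zero_one
     ((real (n2 n x)^2 + 2 powr p * real (n1 n x) * real (n2 n x)) /
      (real (n1 n x)^2 + real (n2 n x)^2 + 2 powr (p + 1) * real (n1 n x) * real (n2 n x)))"

end

theory Submission
  imports Defs
begin

text \<open>Apart from the constant uniform mechanism, each mechanism puts the facility at 0 with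
  some probability \<open>Q (n\<^sub>2)\<close> and at 1 otherwise, so an agent at \<open>z \<in> [0,1]\<close> has
  utility \<open>Q z + (1 - Q) (1 - z)\<close>, and \<open>Q\<close> is nondecreasing in \<open>n\<^sub>2\<close>.
  A coalition can only raise \<open>n\<^sub>2\<close> if it contains an agent in \<open>[0, 1/2]\<close>, for whom a larger
  \<open>Q\<close> is no better; symmetrically, lowering \<open>n\<^sub>2\<close> needs an agent in \<open>(1/2, 1]\<close>.
  For \<open>P\<^sub>0\<close>, monotonicity comes from a factorisation of the cross-multiplied difference.\<close>

lemma n1_plus_n2:
  assumes "valid_profile n x"
  shows "n1 n x + n2 n x = n"
proof -
  have "{i\<in>{1..n}. x i \<in> {0..1/2}} \<union> {i\<in>{1..n}. x i \<in> {1/2<..1}} = {1..n}"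
    using assms unfolding valid_profile_def by auto
  moreover have "card ({i\<in>{1..n}. x i \<in> {0..1/2}} \<union> {i\<in>{1..n}. x i \<in> {1/2<..1}})
      = card {i\<in>{1..n}. x i \<in> {0..1/2}} + card {i\<in>{1..n}. x i \<in> {1/2<..1}}"
    by (rule card_Un_disjoint) auto
  ultimately show ?thesis
    unfolding n1_def n2_def by simp
qed

lemma n2_le: "n2 n x \<le> n"
proof -
  have "n2 n x \<le> card {1..n}"
    unfolding n2_def by (rule card_mono) auto
  then show ?thesis by simp
qed

lemma n2_misreport_le:
  assumes "\<forall>i\<in>{1..n} - S. x' i = x i" and "\<forall>i\<in>S. x i \<in> {1/2<..1}"
  shows "n2 n x' \<le> n2 n x"
  unfolding n2_def using assms by (intro card_mono) auto

lemma n2_le_misreport: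
  assumes "\<forall>i\<in>{1..n} - S. x' i = x i" and "\<forall>i\<in>S. x i \<notin> {1/2<..1}"
  shows "n2 n x \<le> n2 n x'"
  unfolding n2_def using assms by (intro card_mono) auto

lemma coalition_member_toward_n2_shift:
  assumes "\<forall>i\<in>{1..n} - S. x' i = x i" and "S \<noteq> {}"
  obtains i where "i \<in> S" "n2 n x \<le> n2 n x'" "x i \<notin> {1/2<..1}"
    | i where "i \<in> S" "n2 n x' \<le> n2 n x" "x i \<in> {1/2<..1}"
proof (cases "n2 n x" "n2 n x'" rule: linorder_cases)
  case less
  then show ?thesis
    using n2_misreport_le[OF assms(1)] that(1) by (meson less_imp_le not_le)
next
  case equal
  then show ?thesis
    using assms(2) that by (metis all_not_in_conv order_refl)
next
  case greater
  then show ?thesis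
    using n2_le_misreport[OF assms(1)] that(2) by (meson less_imp_le not_le)
qed

lemma group_strategyproof_monotone_in_n2:
  fixes Q :: "nat \<Rightarrow> real"
  assumes util: "\<And>x z. valid_profile n x \<Longrightarrow> z \<in> {0..1} \<Longrightarrow>
      util (f x) z = Q (n2 n x) * z + (1 - Q (n2 n x)) * (1 - z)"
    and mono: "mono_on {..n} Q"
  shows "group_strategyproof n f"
  unfolding group_strategyproof_def
proof (intro allI impI, elim conjE)
  fix x S x'
  assume x: "valid_profile n x" and S: "S \<subseteq> {1..n}" "S \<noteq> {}"
    and x': "valid_profile n x'" and agree: "\<forall>i\<in>{1..n} - S. x' i = x i"
  let ?b = "n2 n x" and ?b' = "n2 n x'"
  have no_gain: "\<exists>i\<in>S. util (f x') (x i) \<le> util (f x) (x i)"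
    if "i \<in> S" "(Q ?b' - Q ?b) * (2 * x i - 1) \<le> 0" for i
  proof -
    have "x i \<in> {0..1}"
      using x S(1) that(1) unfolding valid_profile_def by auto
    then have "util (f x') (x i) - util (f x) (x i) = (Q ?b' - Q ?b) * (2 * x i - 1)"
      using util[OF x, of "x i"] util[OF x', of "x i"] by (simp add: algebra_simps)
    then show ?thesis
      using that by (metis diff_le_0_iff_le)
  qed
  have Q_mono: "Q b \<le> Q b'" if "b \<le> b'" "b' \<le> n" for b b'
    using mono_onD[OF mono] that by simp
  show "\<exists>i\<in>S. util (f x') (x i) \<le> util (f x) (x i)"
  proof (rule coalition_member_toward_n2_shift[OF agree S(2)])
    fix i assume i: "i \<in> S" "?b \<le> ?b'" "x i \<notin> {1/2<..1}"
    moreover have "x i \<le> 1"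
      using x S(1) i(1) unfolding valid_profile_def by auto
    ultimately have "(Q ?b' - Q ?b) * (2 * x i - 1) \<le> 0"
      using Q_mono[of ?b ?b'] n2_le[of n x'] by (intro mult_nonneg_nonpos) auto
    with i(1) show ?thesis by (rule no_gain)
  next
    fix i assume i: "i \<in> S" "?b' \<le> ?b" "x i \<in> {1/2<..1}"
    then have "(Q ?b' - Q ?b) * (2 * x i - 1) \<le> 0"
      using Q_mono[of ?b' ?b] n2_le[of n x] by (intro mult_nonpos_nonneg) auto
    with i(1) show ?thesis by (rule no_gain)
  qed
qed

lemma util_zero_one:
  assumes "q \<in> {0..1}" and "z \<in> {0..1}"
  shows "util (zero_one q) z = q * z + (1 - q) * (1 - z)"
  using assms unfolding util_def zero_one_def by simp

lemma group_strategyproof_zero_one: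
  fixes Q :: "nat \<Rightarrow> real"
  assumes "\<And>x. valid_profile n x \<Longrightarrow> f x = zero_one (Q (n2 n x))"
    and "\<And>b. b \<le> n \<Longrightarrow> Q b \<in> {0..1}"
    and "mono_on {..n} Q"
  shows "group_strategyproof n f"
  using assms util_zero_one n2_le by (intro group_strategyproof_monotone_in_n2) auto

lemma group_strategyproof_const: "group_strategyproof n (\<lambda>x. M)"
  unfolding group_strategyproof_def by blast

text \<open>The paper's \<open>P\<^sub>0\<close> with \<open>n\<^sub>2 = b\<close>, \<open>n\<^sub>1 = n - b\<close> and \<open>c = 2\<^sup>p\<close>; \<open>c = 0\<close> gives mechanism (3).\<close>

definition prob_at_zero :: "real \<Rightarrow> real \<Rightarrow> real \<Rightarrow> real" where
  "prob_at_zero c n b = (b\<^sup>2 + c * (n - b) * b) / ((n - b)\<^sup>2 + b\<^sup>2 + 2 * c * (n - b) * b)"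

lemma prob_at_zero_bounds:
  assumes "0 \<le> c" "0 \<le> b" "b \<le> n"
  shows "prob_at_zero c n b \<in> {0..1}"
proof -
  define N where "N = b\<^sup>2 + c * (n - b) * b"
  define M where "M = (n - b)\<^sup>2 + c * (n - b) * b"
  have "0 \<le> N" "0 \<le> M"
    unfolding N_def M_def using assms by simp_all
  then have "N / (N + M) \<in> {0..1}"
    by (auto simp: divide_le_eq_1)
  moreover have "prob_at_zero c n b = N / (N + M)"
    unfolding prob_at_zero_def N_def M_def by (simp add: algebra_simps)
  ultimately show ?thesis by simp
qed

lemma prob_at_zero_mono:
  assumes c: "0 \<le> c" and b: "0 \<le> b" "b \<le> b'" "b' \<le> n"
  shows "prob_at_zero c n b \<le> prob_at_zero c n b'"
proof (cases "n = 0")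
  case True
  then have "b = b'" using b by simp
  then show ?thesis by simp
next
  case False
  define N where "N b = b\<^sup>2 + c * (n - b) * b" for b
  define D where "D b = (n - b)\<^sup>2 + b\<^sup>2 + 2 * c * (n - b) * b" for b
  have D_pos: "0 < D b" if "0 \<le> b" "b \<le> n" for b
  proof -
    have "0 < (n - b)\<^sup>2 + b\<^sup>2"
      using False by (auto simp: sum_power2_gt_zero_iff)
    moreover have "0 \<le> 2 * c * (n - b) * b"
      using c that by simp
    ultimately show ?thesis
      unfolding D_def by linarith
  qed
  define t where "t = 2 * b - n"
  define t' where "t' = 2 * b' - n"
  \<comment> \<open>With \<open>t = n\<^sub>2 - n\<^sub>1\<close>: \<open>N = (D + n t) / 2\<close> and \<open>2 D = (c + 1) n\<^sup>2 - (c - 1) t\<^sup>2\<close>.\<close>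
  have factor: "N b' * D b - N b * D b'
      = n * (b' - b) * (c * (n\<^sup>2 + t * t') + (n\<^sup>2 - t * t')) / 2"
    unfolding N_def D_def t_def t'_def by algebra
  have "\<bar>t * t'\<bar> \<le> n\<^sup>2"
    unfolding abs_mult power2_eq_square t_def t'_def using b by (intro mult_mono) auto
  then have "0 \<le> n\<^sup>2 + t * t'" "0 \<le> n\<^sup>2 - t * t'"
    by (simp_all add: abs_le_iff)
  then have "0 \<le> c * (n\<^sup>2 + t * t') + (n\<^sup>2 - t * t')"
    using c by simp
  then have "0 \<le> n * (b' - b) * (c * (n\<^sup>2 + t * t') + (n\<^sup>2 - t * t')) / 2"
    using b by simp
  then have "N b * D b' \<le> N b' * D b"
    using factor by linarith
  then have "N b / D b \<le> N b' / D b'"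
    using D_pos[of b] D_pos[of b'] b by (simp add: frac_le_eq mult.commute divide_nonpos_pos)
  then show ?thesis
    unfolding prob_at_zero_def N_def D_def .
qed

lemma group_strategyproof_prob_at_zero:
  assumes "0 \<le> c"
    and "\<And>x. valid_profile n x \<Longrightarrow> f x = zero_one (prob_at_zero c n (n2 n x))"
  shows "group_strategyproof n f"
  using assms prob_at_zero_bounds prob_at_zero_mono
  by (intro group_strategyproof_zero_one[where Q = "\<lambda>b. prob_at_zero c n b"])
     (auto intro: mono_onI)

theorem lemma2:
  fixes n :: nat and p :: real
  shows "group_strategyproof n (mech_majority n)
       \<and> group_strategyproof n (mech_uniform n)
       \<and> group_strategyproof n (mech_square n)
       \<and> group_strategyproof n (mech_param p n)"
proof (intro conjI)
  have n1_eq: "real (n1 n x) = real n - real (n2 n x)" if "valid_profile n x" for x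
    using n1_plus_n2[OF that] by linarith
  show "group_strategyproof n (mech_majority n)"
  proof (rule group_strategyproof_monotone_in_n2[where Q = "\<lambda>b. if n \<le> 2 * b then 1 else 0"])
    fix x and z :: real
    assume "valid_profile n x" "z \<in> {0..1}"
    then show "util (mech_majority n x) z
        = (if n \<le> 2 * n2 n x then 1 else 0) * z + (1 - (if n \<le> 2 * n2 n x then 1 else 0)) * (1 - z)"
      using n1_plus_n2[of n x] unfolding util_def mech_majority_def by auto
  qed (auto intro: mono_onI)
  show "group_strategyproof n (mech_uniform n)"
    unfolding mech_uniform_def by (rule group_strategyproof_const)
  show "group_strategyproof n (mech_square n)"
    by (rule group_strategyproof_prob_at_zero[where c = 0])
       (simp_all add: mech_square_def prob_at_zero_def n1_eq)
  have "(2::real) powr (p + 1) = 2 * 2 powr p"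
    by (simp add: powr_add)
  then show "group_strategyproof n (mech_param p n)"
    by (intro group_strategyproof_prob_at_zero[where c = "2 powr p"])
       (simp_all add: mech_param_def prob_at_zero_def n1_eq mult.assoc)
qed

end
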